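(* There is an absolute constant $C$ such that the following holds. Let $\mathcal D$ be an atomic filtration on $I_0=[0,1]$ (as described in the context) and let $f\in L^1(I_0)$. Then there exists a sparse collection $\mathcal S\subset\mathcal D$ (depending on $f$) such that $Sf(x)\le C\,S_{\mathcal S}f(x)$ for almost every $x\in I_0$.
   Context: $I_0=[0,1]$ carries a probability measure $\nu$ ($|I|=\nu(I)$). Atomic filtration: an increasing sequence of $\sigma$-algebras $\mathcal F_n$, $n\ge0$, with $\mathcal F_0$ trivial, each generated by a finite partition $\mathcal D_n$ of $I_0$ into sets of positive measure (atoms), $\mathcal D_0=\{I_0\}$; an atom is formally a pair $(I,n)$, $I\in\mathcal D_n$, and $\mathcal D=\bigcup_n\mathcal D_n$; $\mathrm{ch}(I)$ are the atoms of $\mathcal D_{n+1}$ contained in $I$. Averages $\langle f\rangle_I=|I|^{-1}\int_If\,d\nu$, $\mathbb E_If=\langle f\rangle_I\mathbf 1_I$, $\Delta_If=\sum_{I'\in\mathrm{ch}(I)}\mathbb E_{I'}f-\mathbb E_If$, $Sf=\big(\sum_{I\in\mathcal D}(\Delta_If)^2\big)^{1/2}$. A collection $\mathcal S\subset\mathcal D$ is sparse if for every $J\in\mathcal S$, $\sum_{I\in\mathrm{ch}_{\mathcal S}J}|I|\le|J|/2$, where $\mathrm{ch}_{\mathcal S}J$ denotes the maximal (by inclusion) elements of $\mathcal S$ strictly contained in $J$. Sparse square function: $S_{\mathcal S}f(x)=\big(\sum_{I\in\mathcal S}\langle|f|\rangle_I^2\mathbf 1_I(x)\big)^{1/2}$.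 *)

theory Defs
  imports "HOL-Probability.Probability"
begin

definition unit_prob :: "real measure \<Rightarrow> bool" where
  "unit_prob M \<longleftrightarrow> prob_space M \<and> space M = {0..1} \<and>
      sets M = sets (restrict_space borel {0..1::real})"

text \<open>Atomic filtration: D n is the finite partition generating F n.
  Increasing sigma-algebras generated by finite partitions means each atom of
  D (Suc n) lies inside an atom of D n.\<close>

definition atomic_filtration :: "real measure \<Rightarrow> (nat \<Rightarrow> real set set) \<Rightarrow> bool" where
  "atomic_filtration M D \<longleftrightarrow>
     D 0 = {{0..1}} \<and>
     (\<forall>n. finite (D n) \<and> \<Union>(D n) = {0..1} \<and> disjoint (D n) \<and>
          (\<forall>I\<in>D n. I \<in> sets M \<and> measure M I > 0)) \<and>
     (\<forall>n. \<forall>I\<in>D (Suc n). \<exists>J\<in>D n. I \<subseteq> J)"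

definition atoms :: "(nat \<Rightarrow> real set set) \<Rightarrow> (real set \<times> nat) set" where
  "atoms D = {(I, n). I \<in> D n}"

definition avg :: "real measure \<Rightarrow> real set \<Rightarrow> (real \<Rightarrow> real) \<Rightarrow> real" where
  "avg M I f = (LINT x:I|M. f x) / measure M I"

definition cond_exp_atom :: "real measure \<Rightarrow> real set \<Rightarrow> (real \<Rightarrow> real) \<Rightarrow> real \<Rightarrow> real" where
  "cond_exp_atom M I f x = avg M I f * indicator I x"

definition ch :: "(nat \<Rightarrow> real set set) \<Rightarrow> real set \<Rightarrow> nat \<Rightarrow> real set set" where
  "ch D I n = {I' \<in> D (Suc n). I' \<subseteq> I}"

definition mart_diff :: "real measure \<Rightarrow> (nat \<Rightarrow> real set set) \<Rightarrow> real set \<Rightarrow> nat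
      \<Rightarrow> (real \<Rightarrow> real) \<Rightarrow> real \<Rightarrow> real" where
  "mart_diff M D I n f x = (\<Sum>I'\<in>ch D I n. cond_exp_atom M I' f x) - cond_exp_atom M I f x"

definition esqrt :: "ennreal \<Rightarrow> ennreal" where
  "esqrt t = (if t = \<infinity> then \<infinity> else ennreal (sqrt (enn2real t)))"

definition square_fn :: "real measure \<Rightarrow> (nat \<Rightarrow> real set set) \<Rightarrow> (real \<Rightarrow> real) \<Rightarrow> real \<Rightarrow> ennreal" where
  "square_fn M D f x = esqrt (\<Sum>n. \<Sum>I\<in>D n. ennreal ((mart_diff M D I n f x)\<^sup>2))"

definition atom_less :: "real set \<times> nat \<Rightarrow> real set \<times> nat \<Rightarrow> bool" where
  "atom_less a b \<longleftrightarrow> fst a \<subseteq> fst b \<and> snd b \<le> snd a \<and> a \<noteq> b"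

definition chS :: "(real set \<times> nat) set \<Rightarrow> real set \<times> nat \<Rightarrow> (real set \<times> nat) set" where
  "chS S J = {a \<in> S. atom_less a J \<and> \<not> (\<exists>b\<in>S. atom_less b J \<and> atom_less a b)}"

definition sparse_collection :: "real measure \<Rightarrow> (real set \<times> nat) set \<Rightarrow> bool" where
  "sparse_collection M S \<longleftrightarrow> (\<forall>J\<in>S.
      (\<Sum>k. \<Sum>I\<in>{I. (I, k) \<in> chS S J}. emeasure M I) \<le> emeasure M (fst J) / 2)"

definition sparse_square_fn :: "real measure \<Rightarrow> (real set \<times> nat) set \<Rightarrow> (real \<Rightarrow> real) \<Rightarrow> real \<Rightarrow> ennreal" where
  "sparse_square_fn M S f x =
     esqrt (\<Sum>n. \<Sum>I\<in>{I. (I, n) \<in> S}. ennreal ((avg M I (\<lambda>y. \<bar>f y\<bar>))\<^sup>2 * indicator I x))"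

end

theory Submission
  imports Defs
begin

(*
  Fix x and follow the chain of atoms containing it: a n = E_n f (x) and b n = E_n |f| (x),
  so that |a n| <= b n and S f (x)^2 is the sum of the squared increments of a.  Stop at 0, and
  after a stop p stop again at the first m with b m > 4 b p or with the squared increments since p
  exceeding 96 (b p)^2.  Between two stops the increments are controlled by (b p)^2, which gives
  S f (x)^2 <= 130 * (sum of (b p)^2 over the stops p of x) -- the sparse square function of the
  collection of atoms at which some point stops.

  Sparseness: the next stops below a stopping atom J with lambda = <|f|>_J lie either where the
  martingale of |f| exceeds 4 lambda (measure <= |J|/4 by the weak (1,1) maximal inequality) or
  where the square function of the martingale of f, stopped before |f| exceeds 4 lambda, exceeds
  96 lambda^2 (measure <= |J|/4 by an L^2 estimate of that stopped square function).
*)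

definition stops :: "(nat \<Rightarrow> real) \<Rightarrow> (nat \<Rightarrow> real) \<Rightarrow> nat \<Rightarrow> nat \<Rightarrow> bool" where
  "stops a b p m \<longleftrightarrow> b m > 4 * b p \<or> (\<Sum>j\<in>{p..<m}. (a (Suc j) - a j)\<^sup>2) > 96 * (b p)\<^sup>2"

primrec last_stop :: "(nat \<Rightarrow> real) \<Rightarrow> (nat \<Rightarrow> real) \<Rightarrow> nat \<Rightarrow> nat" where
  "last_stop a b 0 = 0"
| "last_stop a b (Suc n) = (if stops a b (last_stop a b n) (Suc n) then Suc n else last_stop a b n)"

declare last_stop.simps(2) [simp del]

lemma last_stop_le: "last_stop a b n \<le> n"
  by (induction n) (auto simp: last_stop.simps(2))

lemma last_stop_Suc_cases: "last_stop a b (Suc n) = Suc n \<or> last_stop a b (Suc n) = last_stop a b n"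
  by (simp add: last_stop.simps(2))

lemma last_stop_mono: "m \<le> n \<Longrightarrow> last_stop a b m \<le> last_stop a b n"
proof (induction n rule: dec_induct)
  case (step n)
  then show ?case using last_stop_Suc_cases[of a b n] last_stop_le[of a b n] by linarith
qed simp

lemma last_stop_idem: "last_stop a b (last_stop a b n) = last_stop a b n"
proof (induction n)
  case (Suc n)
  then show ?case using last_stop_Suc_cases[of a b n] by (elim disjE) simp_all
qed simp

lemma last_stop_eq_between:
  assumes "last_stop a b N \<le> m" "m \<le> N"
  shows "last_stop a b m = last_stop a b N"
  using last_stop_mono[OF assms(1), of a b] last_stop_mono[OF assms(2), of a b]
  by (simp add: last_stop_idem)

lemma not_stops_before_last_stop:
  assumes "last_stop a b N < m" "m \<le> N"
  shows "\<not> stops a b (last_stop a b N) m"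
proof
  assume stop: "stops a b (last_stop a b N) m"
  obtain k where k: "m = Suc k" using assms(1) by (cases m) auto
  have "last_stop a b k = last_stop a b N" "last_stop a b (Suc k) = last_stop a b N"
    using last_stop_eq_between[of a b N k] last_stop_eq_between[of a b N "Suc k"] assms k by auto
  then show False using stop assms(1) k by (simp add: last_stop.simps(2))
qed

lemma stops_at_next_stop:
  assumes p: "last_stop a b p = p" and k: "last_stop a b k = k" and "p < k"
    and between: "\<And>i. p < i \<Longrightarrow> i < k \<Longrightarrow> last_stop a b i \<noteq> i"
  shows "stops a b p k"
proof -
  have const: "last_stop a b i = p" if "p \<le> i" "i < k" for i
    using that
  proof (induction i rule: dec_induct)
    case (step i)
    then show ?case using between[of "Suc i"] last_stop_Suc_cases[of a b i] by auto
  qed (use p in simp)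
  obtain k' where "k = Suc k'" using \<open>p < k\<close> by (cases k) auto
  then show ?thesis using const[of k'] k \<open>p < k\<close> by (auto simp: last_stop.simps(2) split: if_splits)
qed

lemma last_stop_cong:
  "(\<And>j. j \<le> n \<Longrightarrow> a j = a' j \<and> b j = b' j) \<Longrightarrow> last_stop a b n = last_stop a' b' n"
proof (induction n)
  case (Suc n)
  define p where "p = last_stop a b n"
  have "p \<le> n" using last_stop_le p_def by simp
  have "stops a b p (Suc n) = stops a' b' p (Suc n)"
  proof -
    have "b (Suc n) = b' (Suc n)" "b p = b' p" using Suc.prems \<open>p \<le> n\<close> by auto
    moreover have "(\<Sum>j\<in>{p..<Suc n}. (a (Suc j) - a j)\<^sup>2) = (\<Sum>j\<in>{p..<Suc n}. (a' (Suc j) - a' j)\<^sup>2)"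
      using Suc.prems by (intro sum.cong) auto
    ultimately show ?thesis unfolding stops_def by simp
  qed
  moreover have "last_stop a b n = last_stop a' b' n" using Suc by simp
  ultimately show ?case by (simp add: last_stop.simps(2) p_def)
qed simp

lemma sq_diff_le: "\<bar>x\<bar> \<le> u \<Longrightarrow> \<bar>y\<bar> \<le> v \<Longrightarrow> (x - y)\<^sup>2 \<le> 2 * u\<^sup>2 + 2 * (v::real)\<^sup>2"
proof -
  assume "\<bar>x\<bar> \<le> u" "\<bar>y\<bar> \<le> v"
  then have "x\<^sup>2 \<le> u\<^sup>2" "y\<^sup>2 \<le> v\<^sup>2" by (metis abs_ge_zero power2_abs power_mono)+
  moreover have "(x - y)\<^sup>2 = 2 * x\<^sup>2 + 2 * y\<^sup>2 - (x + y)\<^sup>2" by (simp add: power2_eq_square algebra_simps)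
  ultimately show ?thesis by (smt (verit) zero_le_power2)
qed

context
  fixes a b :: "nat \<Rightarrow> real"
  assumes dominated: "\<And>n. \<bar>a n\<bar> \<le> b n"
begin

lemma bounds_since_last_stop:
  "(\<Sum>j\<in>{last_stop a b N..<N}. (a (Suc j) - a j)\<^sup>2) \<le> 96 * (b (last_stop a b N))\<^sup>2
     \<and> b N \<le> 4 * b (last_stop a b N)"
proof (cases "last_stop a b N < N")
  case True
  then show ?thesis using not_stops_before_last_stop[of a b N N] by (auto simp: stops_def not_less)
next
  case False
  then have "last_stop a b N = N" using last_stop_le[of a b N] by auto
  then show ?thesis using dominated[of N] by simp
qed

lemma sum_increments_le_last_stop:
  "(\<Sum>n<N. (a (Suc n) - a n)\<^sup>2)
     \<le> 130 * (\<Sum>n<last_stop a b N. if last_stop a b n = n then (b n)\<^sup>2 else 0)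
       + 2 * (b (last_stop a b N))\<^sup>2 + (\<Sum>j\<in>{last_stop a b N..<N}. (a (Suc j) - a j)\<^sup>2)"
  (is "?S N \<le> 130 * ?E (last_stop a b N) + 2 * _ + ?R N (last_stop a b N)")
proof (induction N)
  case (Suc N)
  define p where "p = last_stop a b N"
  have "p \<le> N" using last_stop_le p_def by auto
  show ?case
  proof (cases "last_stop a b (Suc N) = Suc N")
    case False
    then have "last_stop a b (Suc N) = p" using last_stop_Suc_cases[of a b N] p_def by simp
    moreover have "{p..<Suc N} = insert N {p..<N}" using \<open>p \<le> N\<close> by auto
    ultimately show ?thesis using Suc.IH by (simp add: p_def)
  next
    case True
    have "(a (Suc N) - a N)\<^sup>2 \<le> 2 * (b (Suc N))\<^sup>2 + 2 * (b N)\<^sup>2"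
      by (intro sq_diff_le dominated)
    moreover have "(b N)\<^sup>2 \<le> 16 * (b p)\<^sup>2" and "?R N p \<le> 96 * (b p)\<^sup>2"
      using bounds_since_last_stop[of N] power_mono[of "b N" "4 * b p" 2] dominated[of N]
      by (auto simp: p_def power_mult_distrib)
    moreover have "?E p + (b p)\<^sup>2 \<le> ?E (Suc N)"
    proof -
      have "?E (Suc p) \<le> ?E (Suc N)" using \<open>p \<le> N\<close> by (intro sum_mono2) auto
      then show ?thesis using last_stop_idem[of a b N] by (simp add: p_def)
    qed
    ultimately show ?thesis using Suc.IH True by (simp add: p_def)
  qed
qed simp

lemma sum_increments_le_stops:
  "(\<Sum>n<N. (a (Suc n) - a n)\<^sup>2) \<le> 130 * (\<Sum>n<Suc N. if last_stop a b n = n then (b n)\<^sup>2 else 0)"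
  (is "_ \<le> 130 * ?E (Suc N)")
proof -
  let ?p = "last_stop a b N"
  have "(\<Sum>n<N. (a (Suc n) - a n)\<^sup>2) \<le> 130 * ?E ?p + 98 * (b ?p)\<^sup>2"
    using sum_increments_le_last_stop[of N] bounds_since_last_stop[of N] by linarith
  also have "\<dots> \<le> 130 * ?E (Suc ?p)"
    using last_stop_idem[of a b N] by simp
  also have "\<dots> \<le> 130 * ?E (Suc N)"
    using last_stop_le[of a b N] by (intro mult_left_mono sum_mono2) auto
  finally show ?thesis .
qed

lemma suminf_increments_le_stops:
  "(\<Sum>n. ennreal ((a (Suc n) - a n)\<^sup>2))
     \<le> ennreal 130 * (\<Sum>n. ennreal (if last_stop a b n = n then (b n)\<^sup>2 else 0))"
proof -
  define e where "e n = (if last_stop a b n = n then (b n)\<^sup>2 else 0)" for n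
  have "(\<Sum>n<N. ennreal ((a (Suc n) - a n)\<^sup>2)) \<le> ennreal 130 * (\<Sum>n. ennreal (e n))" for N
  proof -
    have "(\<Sum>n<N. ennreal ((a (Suc n) - a n)\<^sup>2)) = ennreal (\<Sum>n<N. (a (Suc n) - a n)\<^sup>2)"
      by (rule sum_ennreal) simp
    also have "\<dots> \<le> ennreal (130 * (\<Sum>n<Suc N. e n))"
      using sum_increments_le_stops[of N] by (intro ennreal_leI) (simp add: e_def)
    also have "\<dots> = ennreal 130 * (\<Sum>n<Suc N. ennreal (e n))"
      by (simp add: e_def ennreal_mult sum_ennreal sum_nonneg)
    also have "\<dots> \<le> ennreal 130 * (\<Sum>n. ennreal (e n))"
      by (intro mult_left_mono sum_le_suminf) auto
    finally show ?thesis .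
  qed
  then show ?thesis
    unfolding suminf_eq_SUP[of "\<lambda>n. ennreal ((a (Suc n) - a n)\<^sup>2)"] by (simp add: e_def SUP_least)
qed

end

lemma esqrt_mono: "s \<le> t \<Longrightarrow> esqrt s \<le> esqrt t"
  by (cases "t = \<infinity>") (auto simp: esqrt_def top_unique less_top intro!: ennreal_leI enn2real_mono)

lemma esqrt_mult:
  assumes "0 \<le> c"
  shows "esqrt (ennreal c * t) = ennreal (sqrt c) * esqrt t"
proof (cases t)
  case (real r)
  then have "esqrt (ennreal c * t) = ennreal (sqrt (c * r))"
    using assms by (simp add: esqrt_def ennreal_mult[symmetric])
  also have "\<dots> = ennreal (sqrt c) * esqrt t"
    using real assms by (simp add: esqrt_def real_sqrt_mult ennreal_mult)
  finally show ?thesis .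
qed (use assms in \<open>simp add: esqrt_def ennreal_mult_top\<close>)

lemma abs_set_integral_le:
  fixes g :: "'a \<Rightarrow> real"
  assumes "integrable M g" "I \<in> sets M"
  shows "\<bar>LINT x:I|M. g x\<bar> \<le> (LINT x:I|M. \<bar>g x\<bar>)"
proof -
  have "set_integrable M I g"
    unfolding set_integrable_def using assms by (intro Bochner_Integration.integrable_mult_indicator)
  then show ?thesis using set_integral_norm_bound by fastforce
qed

lemma avg_abs_nonneg: "0 \<le> avg M I (\<lambda>x. \<bar>g x\<bar>)"
  unfolding avg_def set_lebesgue_integral_def by (simp add: integral_nonneg_AE)

lemma abs_avg_le_avg_abs:
  assumes "integrable M g" "I \<in> sets M"
  shows "\<bar>avg M I g\<bar> \<le> avg M I (\<lambda>x. \<bar>g x\<bar>)"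
  using abs_set_integral_le[OF assms] unfolding avg_def by (simp add: abs_divide divide_right_mono)

lemma set_integral_abs_mono:
  fixes g :: "'a \<Rightarrow> real"
  assumes "integrable M g" "I \<in> sets M" "J \<in> sets M" "I \<subseteq> J"
  shows "(LINT x:I|M. \<bar>g x\<bar>) \<le> (LINT x:J|M. \<bar>g x\<bar>)"
  unfolding set_lebesgue_integral_def
proof (rule Bochner_Integration.integral_mono)
  show "integrable M (\<lambda>x. indicator I x *\<^sub>R \<bar>g x\<bar>)"
    using assms by (intro Bochner_Integration.integrable_mult_indicator integrable_abs)
  show "integrable M (\<lambda>x. indicator J x *\<^sub>R \<bar>g x\<bar>)"
    using assms by (intro Bochner_Integration.integrable_mult_indicator integrable_abs)
  show "indicator I x *\<^sub>R \<bar>g x\<bar> \<le> indicator J x *\<^sub>R \<bar>g x\<bar>" for x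
    using assms(4) by (auto simp: indicator_def)
qed

locale atomic_filtration_space =
  fixes M :: "real measure" and D :: "nat \<Rightarrow> real set set"
  assumes prob_space: "prob_space M" and filtration: "atomic_filtration M D"
begin

sublocale P: prob_space M by (rule prob_space)

lemma finite_atoms: "finite (D n)"
  using filtration unfolding atomic_filtration_def by auto

lemma Union_atoms: "\<Union>(D n) = {0..1}"
  using filtration unfolding atomic_filtration_def by auto

lemma atoms_disjoint: "I \<in> D n \<Longrightarrow> J \<in> D n \<Longrightarrow> x \<in> I \<Longrightarrow> x \<in> J \<Longrightarrow> I = J"
  using filtration unfolding atomic_filtration_def disjoint_def by blast

lemma atom_sets: "I \<in> D n \<Longrightarrow> I \<in> sets M"
  using filtration unfolding atomic_filtration_def by auto

lemma atom_measure_pos: "I \<in> D n \<Longrightarrow> 0 < measure M I"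
  using filtration unfolding atomic_filtration_def by auto

lemma atom_nonempty: "I \<in> D n \<Longrightarrow> I \<noteq> {}"
  using atom_measure_pos by force

lemma atom_subset: "I \<in> D n \<Longrightarrow> I \<subseteq> {0..1}"
  using Union_atoms by blast

lemma atom_refines: "I \<in> D (Suc n) \<Longrightarrow> \<exists>J\<in>D n. I \<subseteq> J"
  using filtration unfolding atomic_filtration_def by auto

definition atom_at :: "nat \<Rightarrow> real \<Rightarrow> real set" where
  "atom_at n x = (THE I. I \<in> D n \<and> x \<in> I)"

lemma atom_at_eq: "I \<in> D n \<Longrightarrow> x \<in> I \<Longrightarrow> atom_at n x = I"
  unfolding atom_at_def by (rule the_equality) (use atoms_disjoint in blast)+

lemma atom_at_in: "x \<in> {0..1} \<Longrightarrow> atom_at n x \<in> D n"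
  and mem_atom_at: "x \<in> {0..1} \<Longrightarrow> x \<in> atom_at n x"
  using Union_atoms[of n] atom_at_eq by blast+

lemma atom_at_Suc_subset:
  assumes "x \<in> {0..1}"
  shows "atom_at (Suc n) x \<subseteq> atom_at n x"
proof -
  obtain J where J: "J \<in> D n" "atom_at (Suc n) x \<subseteq> J"
    using atom_refines[OF atom_at_in[OF assms]] by blast
  then have "x \<in> J" using mem_atom_at[OF assms] by blast
  then show ?thesis using atom_at_eq[OF J(1)] J(2) by simp
qed

lemma atom_at_antimono:
  assumes "x \<in> {0..1}" "n \<le> m"
  shows "atom_at m x \<subseteq> atom_at n x"
  using assms(2)
proof (induction m rule: dec_induct)
  case (step m)
  then show ?case using atom_at_Suc_subset[OF assms(1), of m] by simp
qed simp

lemma atom_at_eq_coarser: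
  assumes "y \<in> {0..1}" "z \<in> {0..1}" "atom_at n y = atom_at n z" "j \<le> n"
  shows "atom_at j y = atom_at j z"
proof -
  have "y \<in> atom_at j z"
    using mem_atom_at[OF assms(1), of n] assms(3) atom_at_antimono[OF assms(2,4)] by auto
  then show ?thesis using atom_at_eq[OF atom_at_in[OF assms(2)]] by simp
qed

lemma sets_determined_at:
  assumes "\<And>y z. y \<in> {0..1} \<Longrightarrow> z \<in> {0..1} \<Longrightarrow> atom_at N y = atom_at N z \<Longrightarrow> P y \<Longrightarrow> P z"
  shows "{y \<in> {0..1}. P y} \<in> sets M"
proof -
  have "{y \<in> {0..1}. P y} = \<Union>{I \<in> D N. \<exists>y\<in>I. P y}"
  proof (intro equalityI subsetI)
    fix z assume "z \<in> \<Union>{I \<in> D N. \<exists>y\<in>I. P y}"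
    then obtain I y where "I \<in> D N" "z \<in> I" "y \<in> I" "P y" by blast
    then show "z \<in> {y \<in> {0..1}. P y}"
      using assms[of y z] atom_at_eq atom_subset by blast
  qed (use atom_at_in mem_atom_at in blast)
  also have "\<dots> \<in> sets M"
    using finite_atoms atom_sets by (intro sets.finite_Union) auto
  finally show ?thesis .
qed

lemma in_atom_determined:
  assumes "I \<in> D n" "n \<le> N" "y \<in> {0..1}" "z \<in> {0..1}" "atom_at N y = atom_at N z" "y \<in> I"
  shows "z \<in> I"
  using atom_at_eq_coarser[OF assms(3-5,2)] atom_at_eq[OF assms(1,6)] mem_atom_at[OF assms(4), of n]
  by simp

lemma atom_subset_sets_determined:
  assumes "I \<in> D n" "n \<le> N"
    and "\<And>y z. y \<in> {0..1} \<Longrightarrow> z \<in> {0..1} \<Longrightarrow> atom_at N y = atom_at N z \<Longrightarrow> P y \<Longrightarrow> P z"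
  shows "{y \<in> I. P y} \<in> sets M"
proof -
  have "{y \<in> I. P y} = {y \<in> {0..1}. y \<in> I \<and> P y}" using atom_subset[OF assms(1)] by blast
  also have "\<dots> \<in> sets M"
    by (rule sets_determined_at[where N=N]) (use assms in_atom_determined in blast)
  finally show ?thesis .
qed

lemma finite_ch: "finite (ch D I n)"
  using finite_atoms[of "Suc n"] by (simp add: ch_def)

lemma ch_subset_atoms: "ch D I n \<subseteq> D (Suc n)"
  by (auto simp: ch_def)

lemma atom_at_Suc_in_ch:
  assumes "I \<in> D n" "y \<in> I"
  shows "atom_at (Suc n) y \<in> ch D I n"
proof -
  have "y \<in> {0..1}" using assms atom_subset by blast
  then show ?thesis
    using atom_at_in[of y "Suc n"] atom_at_Suc_subset[of y n] atom_at_eq[OF assms]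
    unfolding ch_def by simp
qed

lemma sum_atoms_indicator:
  fixes c :: "real set \<Rightarrow> real"
  assumes x: "x \<in> {0..1}" and F: "F \<subseteq> D k"
  shows "(\<Sum>I\<in>F. c I * indicator I x) = (if atom_at k x \<in> F then c (atom_at k x) else 0)"
proof -
  have fin: "finite F" using F finite_atoms finite_subset by blast
  have zero: "c I * indicator I x = 0" if "I \<in> F" "I \<noteq> atom_at k x" for I
    using that atom_at_eq[of I k x] F by (cases "x \<in> I") auto
  show ?thesis
  proof (cases "atom_at k x \<in> F")
    case True
    have "(\<Sum>I\<in>F. c I * indicator I x)
        = c (atom_at k x) * indicator (atom_at k x) x + (\<Sum>I\<in>F - {atom_at k x}. c I * indicator I x)"
      by (rule sum.remove[OF fin True])
    then show ?thesis using True zero mem_atom_at[OF x] by simp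
  next
    case False
    then have "\<forall>I\<in>F. c I * indicator I x = 0" using zero by blast
    then show ?thesis using False by (simp only: sum.neutral if_False)
  qed
qed

lemma indicator_eq_sum_ch: "I \<in> D n \<Longrightarrow> indicator I x = (\<Sum>I'\<in>ch D I n. indicator I' x :: real)"
proof (cases "x \<in> I")
  case True
  assume I: "I \<in> D n"
  have "(\<Sum>I'\<in>ch D I n. 1 * indicator I' x :: real) = 1"
    using sum_atoms_indicator[OF _ ch_subset_atoms, of x "\<lambda>_. 1"] atom_at_Suc_in_ch[OF I True]
      True atom_subset[OF I] by auto
  then show ?thesis using True by simp
qed (auto simp: ch_def indicator_def intro!: sum.neutral)

lemma set_integral_sum_ch:
  fixes g :: "real \<Rightarrow> real"
  assumes I: "I \<in> D n" and g: "integrable M g"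
  shows "(LINT x:I|M. g x) = (\<Sum>I'\<in>ch D I n. LINT x:I'|M. g x)"
proof -
  have "(LINT x:I|M. g x) = integral\<^sup>L M (\<lambda>x. \<Sum>I'\<in>ch D I n. indicator I' x *\<^sub>R g x)"
    unfolding set_lebesgue_integral_def indicator_eq_sum_ch[OF I] by (simp add: sum_distrib_right)
  also have "\<dots> = (\<Sum>I'\<in>ch D I n. LINT x:I'|M. g x)"
    unfolding set_lebesgue_integral_def
  proof (rule Bochner_Integration.integral_sum)
    fix I' assume "I' \<in> ch D I n"
    then have "I' \<in> sets M" using atom_sets ch_subset_atoms by blast
    then show "integrable M (\<lambda>x. indicator I' x *\<^sub>R g x)"
      using g by (rule Bochner_Integration.integrable_mult_indicator)
  qed
  finally show ?thesis .
qed

lemma measure_sum_ch: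
  assumes I: "I \<in> D n"
  shows "measure M I = (\<Sum>I'\<in>ch D I n. measure M I')"
proof -
  have union: "(\<Union>I'\<in>ch D I n. I') = I"
  proof (intro equalityI subsetI)
    fix x assume "x \<in> I"
    then show "x \<in> (\<Union>I'\<in>ch D I n. I')"
      using atom_at_Suc_in_ch[OF I] mem_atom_at atom_subset[OF I] by blast
  qed (auto simp: ch_def)
  have "disjoint_family_on (\<lambda>I'. I') (ch D I n)"
    unfolding disjoint_family_on_def using atoms_disjoint ch_subset_atoms by (metis disjoint_iff subsetD)
  moreover have "(\<lambda>I'. I') ` ch D I n \<subseteq> sets M" using atom_sets ch_subset_atoms by blast
  ultimately have "measure M (\<Union>I'\<in>ch D I n. I') = (\<Sum>I'\<in>ch D I n. measure M I')"
    by (intro P.finite_measure_finite_Union[OF finite_ch])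
  then show ?thesis unfolding union .
qed

lemma measure_le_sum_cover:
  assumes "finite S" "A \<subseteq> (\<Union>i\<in>S. B i)" "\<And>i. i \<in> S \<Longrightarrow> B i \<in> sets M"
  shows "measure M A \<le> (\<Sum>i\<in>S. measure M (B i))"
proof -
  have "measure M A \<le> measure M (\<Union>i\<in>S. B i)"
    using assms by (intro P.finite_measure_mono) auto
  also have "\<dots> \<le> (\<Sum>i\<in>S. measure M (B i))"
    using assms by (intro measure_UNION_le) auto
  finally show ?thesis .
qed

lemma emeasure_le_half: "measure M A \<le> measure M B / 2 \<Longrightarrow> emeasure M A \<le> emeasure M B / 2"
proof -
  assume "measure M A \<le> measure M B / 2"
  then have "ennreal (measure M A) \<le> ennreal (measure M B / 2)" by (rule ennreal_leI)
  also have "\<dots> = ennreal (measure M B) / ennreal 2" by (rule divide_ennreal[symmetric]) auto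
  finally show ?thesis by (simp add: P.emeasure_eq_measure)
qed

lemma set_integral_eq_measure_avg: "I \<in> D n \<Longrightarrow> (LINT x:I|M. g x) = measure M I * avg M I g"
  using atom_measure_pos[of I n] by (simp add: avg_def)

definition avg_seq :: "(real \<Rightarrow> real) \<Rightarrow> real \<Rightarrow> nat \<Rightarrow> real" where
  "avg_seq g x n = avg M (atom_at n x) g"

lemma avg_seq_eq: "I \<in> D n \<Longrightarrow> x \<in> I \<Longrightarrow> avg_seq g x n = avg M I g"
  by (simp add: avg_seq_def atom_at_eq)

lemma avg_seq_eq_coarser:
  "y \<in> {0..1} \<Longrightarrow> z \<in> {0..1} \<Longrightarrow> atom_at n y = atom_at n z \<Longrightarrow> j \<le> n \<Longrightarrow> avg_seq g y j = avg_seq g z j"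
  unfolding avg_seq_def using atom_at_eq_coarser by metis

lemma mart_diff_eq:
  assumes x: "x \<in> {0..1}" and I: "I \<in> D n"
  shows "mart_diff M D I n g x = (if I = atom_at n x then avg_seq g x (Suc n) - avg_seq g x n else 0)"
proof (cases "x \<in> I")
  case True
  then have "I = atom_at n x" using atom_at_eq[OF I] by simp
  moreover have "(\<Sum>I'\<in>ch D I n. avg M I' g * indicator I' x) = avg_seq g x (Suc n)"
    using sum_atoms_indicator[OF x ch_subset_atoms] atom_at_Suc_in_ch[OF I True]
    by (simp add: avg_seq_def)
  ultimately show ?thesis
    using True unfolding mart_diff_def cond_exp_atom_def by (simp add: avg_seq_def)
next
  case False
  then have "indicator I' x = (0::real)" if "I' \<in> ch D I n" for I'
    using that by (auto simp: ch_def indicator_def)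
  then show ?thesis
    using False mem_atom_at[OF x, of n] unfolding mart_diff_def cond_exp_atom_def by auto
qed

lemma square_fn_eq:
  assumes x: "x \<in> {0..1}"
  shows "square_fn M D g x = esqrt (\<Sum>n. ennreal ((avg_seq g x (Suc n) - avg_seq g x n)\<^sup>2))"
proof -
  have "(\<Sum>I\<in>D n. ennreal ((mart_diff M D I n g x)\<^sup>2))
      = (\<Sum>I\<in>D n. if I = atom_at n x then ennreal ((avg_seq g x (Suc n) - avg_seq g x n)\<^sup>2) else 0)" for n
    by (intro sum.cong) (simp_all add: mart_diff_eq[OF x])
  also have "\<dots> n = ennreal ((avg_seq g x (Suc n) - avg_seq g x n)\<^sup>2)" for n
    using atom_at_in[OF x] finite_atoms by (simp add: sum.delta')
  finally show ?thesis unfolding square_fn_def by simp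
qed

definition exceed_set :: "(real \<Rightarrow> real) \<Rightarrow> real \<Rightarrow> nat \<Rightarrow> nat \<Rightarrow> real set \<Rightarrow> real set" where
  "exceed_set g t N n I = {y \<in> I. \<exists>m. n < m \<and> m \<le> N \<and> t < avg_seq g y m}"

lemma exceed_set_sets:
  assumes "I \<in> D n" "n \<le> N"
  shows "exceed_set g t N n I \<in> sets M"
  unfolding exceed_set_def
proof (rule atom_subset_sets_determined[OF assms])
  fix y z assume yz: "y \<in> {0..1}" "z \<in> {0..1}" "atom_at N y = atom_at N z"
    and "\<exists>m. n < m \<and> m \<le> N \<and> t < avg_seq g y m"
  then show "\<exists>m. n < m \<and> m \<le> N \<and> t < avg_seq g z m"
    using avg_seq_eq_coarser[OF yz] by metis
qed

lemma exceed_set_cover: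
  assumes I: "I \<in> D n"
  shows "exceed_set g t N n I
    \<subseteq> (\<Union>I'\<in>ch D I n. if t < avg M I' g then I' else exceed_set g t N (Suc n) I')"
proof
  fix y assume "y \<in> exceed_set g t N n I"
  then obtain m where m: "n < m" "m \<le> N" "t < avg_seq g y m" and "y \<in> I"
    unfolding exceed_set_def by blast
  define I' where "I' = atom_at (Suc n) y"
  have I': "I' \<in> ch D I n" "y \<in> I'"
    using atom_at_Suc_in_ch[OF I \<open>y \<in> I\<close>] mem_atom_at atom_subset[OF I] \<open>y \<in> I\<close>
    unfolding I'_def by blast+
  have "t < avg M I' g \<or> y \<in> exceed_set g t N (Suc n) I'"
  proof (cases "m = Suc n")
    case True
    then show ?thesis using m(3) avg_seq_eq[OF set_mp[OF ch_subset_atoms I'(1)] I'(2)] by simp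
  next
    case False
    then show ?thesis using m I'(2) unfolding exceed_set_def by auto
  qed
  then show "y \<in> (\<Union>I'\<in>ch D I n. if t < avg M I' g then I' else exceed_set g t N (Suc n) I')"
    using I' by (intro UN_I[of I']) auto
qed

lemma maximal_inequality:
  fixes g :: "real \<Rightarrow> real"
  assumes g: "integrable M g" "\<And>x. 0 \<le> g x" and t: "0 \<le> t"
  shows "n \<le> N \<Longrightarrow> I \<in> D n \<Longrightarrow> t * measure M (exceed_set g t N n I) \<le> (LINT y:I|M. g y)"
proof (induction "N - n" arbitrary: n I)
  case 0
  then have "exceed_set g t N n I = {}" unfolding exceed_set_def by auto
  then show ?case using g(2) unfolding set_lebesgue_integral_def by (simp add: Bochner_Integration.integral_nonneg)
next
  case (Suc k)
  let ?piece = "\<lambda>I'. if t < avg M I' g then I' else exceed_set g t N (Suc n) I'"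
  have ch: "I' \<in> D (Suc n)" if "I' \<in> ch D I n" for I'
    using that ch_subset_atoms by blast
  have "t * measure M (exceed_set g t N n I) \<le> t * (\<Sum>I'\<in>ch D I n. measure M (?piece I'))"
    using Suc.hyps Suc.prems ch atom_sets exceed_set_sets t
    by (intro mult_left_mono measure_le_sum_cover finite_ch exceed_set_cover) auto
  also have "\<dots> \<le> (\<Sum>I'\<in>ch D I n. LINT y:I'|M. g y)"
    unfolding sum_distrib_left
  proof (intro sum_mono)
    fix I' assume I': "I' \<in> ch D I n"
    show "t * measure M (?piece I') \<le> (LINT y:I'|M. g y)"
    proof (cases "t < avg M I' g")
      case True
      then show ?thesis
        using set_integral_eq_measure_avg[OF ch[OF I'], of g] atom_measure_pos[OF ch[OF I']]
        by (simp add: mult.commute mult_right_mono)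
    next
      case False
      then show ?thesis using Suc ch[OF I'] by simp
    qed
  qed
  also have "\<dots> = (LINT y:I|M. g y)" using set_integral_sum_ch[OF Suc.prems(2) g(1)] by simp
  finally show ?case .
qed

lemma atoms_nested:
  assumes "I \<in> D k" "J \<in> D m" "m \<le> k" "y \<in> I" "y \<in> J"
  shows "I \<subseteq> J"
proof -
  have "y \<in> {0..1}" using assms atom_subset by blast
  then show ?thesis
    using atom_at_antimono[OF _ assms(3)] atom_at_eq[OF assms(1,4)] atom_at_eq[OF assms(2,5)] by blast
qed

lemma chS_antichain:
  "(I, k) \<in> chS S J \<Longrightarrow> (I', k') \<in> chS S J \<Longrightarrow> \<not> atom_less (I, k) (I', k')"
  unfolding chS_def by blast

lemma chS_disjoint:
  assumes S: "S \<subseteq> atoms D" and c: "(I, k) \<in> chS S J" "(I', k') \<in> chS S J" "(I, k) \<noteq> (I', k')"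
  shows "I \<inter> I' = {}"
proof (rule ccontr)
  assume "I \<inter> I' \<noteq> {}"
  then obtain y where "y \<in> I" "y \<in> I'" by blast
  moreover have "I \<in> D k" "I' \<in> D k'" using c S unfolding chS_def atoms_def by auto
  ultimately have "atom_less (I, k) (I', k') \<or> atom_less (I', k') (I, k)"
    using atoms_nested[of I k I' k' y] atoms_nested[of I' k' I k y] nat_le_linear[of k k'] c(3)
    unfolding atom_less_def by auto
  then show False using chS_antichain c(1,2) by blast
qed

lemma suminf_chS_emeasure:
  assumes S: "S \<subseteq> atoms D"
  shows "(\<Sum>k. \<Sum>I\<in>{I. (I, k) \<in> chS S J}. emeasure M I) = emeasure M (\<Union>k. \<Union>{I. (I, k) \<in> chS S J})"
proof -
  have level: "{I. (I, k) \<in> chS S J} \<subseteq> D k" for k using S unfolding chS_def atoms_def by auto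
  then have fin: "finite {I. (I, k) \<in> chS S J}" for k using finite_atoms finite_subset by blast
  have sets: "{I. (I, k) \<in> chS S J} \<subseteq> sets M" for k using level atom_sets by blast
  have "(\<Sum>I\<in>{I. (I, k) \<in> chS S J}. emeasure M I) = emeasure M (\<Union>{I. (I, k) \<in> chS S J})" for k
  proof -
    have "disjoint_family_on (\<lambda>I. I) {I. (I, k) \<in> chS S J}"
      unfolding disjoint_family_on_def using chS_disjoint[OF S] by blast
    then show ?thesis using sum_emeasure[OF _ _ fin, of "\<lambda>I. I"] sets by simp
  qed
  moreover have "disjoint_family (\<lambda>k. \<Union>{I. (I, k) \<in> chS S J})"
    unfolding disjoint_family_on_def using chS_disjoint[OF S] by blast
  moreover have "range (\<lambda>k. \<Union>{I. (I, k) \<in> chS S J}) \<subseteq> sets M"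
    using sets fin by (blast intro: sets.finite_Union)
  ultimately show ?thesis using suminf_emeasure[of _ M] by simp
qed

end

locale integrable_on_filtration = atomic_filtration_space +
  fixes f :: "real \<Rightarrow> real"
  assumes integrable_f: "integrable M f"
begin

definition stopping :: "nat \<Rightarrow> real \<Rightarrow> bool" where
  "stopping n x \<longleftrightarrow> last_stop (avg_seq f x) (avg_seq (\<lambda>y. \<bar>f y\<bar>) x) n = n"

definition stopping_atoms :: "(real set \<times> nat) set" where
  "stopping_atoms = {(I, n). I \<in> D n \<and> (\<exists>x\<in>I. stopping n x)}"

lemma avg_seq_dominated: "x \<in> {0..1} \<Longrightarrow> \<bar>avg_seq f x n\<bar> \<le> avg_seq (\<lambda>y. \<bar>f y\<bar>) x n"
  unfolding avg_seq_def using abs_avg_le_avg_abs integrable_f atom_sets atom_at_in by blast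

lemma stopping_eq_coarser:
  assumes "y \<in> {0..1}" "z \<in> {0..1}" "atom_at n y = atom_at n z"
  shows "stopping n y = stopping n z"
proof -
  have "last_stop (avg_seq f y) (avg_seq (\<lambda>y. \<bar>f y\<bar>) y) n = last_stop (avg_seq f z) (avg_seq (\<lambda>y. \<bar>f y\<bar>) z) n"
    by (rule last_stop_cong) (use avg_seq_eq_coarser[OF assms] in blast)
  then show ?thesis unfolding stopping_def by simp
qed

lemma stopping_in_atom:
  assumes "I \<in> D n" "y \<in> I" "z \<in> I"
  shows "stopping n y = stopping n z"
proof (rule stopping_eq_coarser)
  show "atom_at n y = atom_at n z" using atom_at_eq[OF assms(1)] assms(2,3) by simp
qed (use assms atom_subset[OF assms(1)] in blast)+

lemma sparse_square_fn_eq: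
  assumes x: "x \<in> {0..1}"
  shows "sparse_square_fn M stopping_atoms f x
    = esqrt (\<Sum>n. ennreal (if stopping n x then (avg_seq (\<lambda>y. \<bar>f y\<bar>) x n)\<^sup>2 else 0))"
proof -
  have "(\<Sum>I\<in>{I. (I, n) \<in> stopping_atoms}. ennreal ((avg M I (\<lambda>y. \<bar>f y\<bar>))\<^sup>2 * indicator I x))
      = ennreal (if stopping n x then (avg_seq (\<lambda>y. \<bar>f y\<bar>) x n)\<^sup>2 else 0)" for n
  proof -
    have F: "{I. (I, n) \<in> stopping_atoms} \<subseteq> D n" unfolding stopping_atoms_def by auto
    have "atom_at n x \<in> {I. (I, n) \<in> stopping_atoms} \<longleftrightarrow> stopping n x"
      using stopping_in_atom[OF atom_at_in[OF x]] atom_at_in[OF x] mem_atom_at[OF x]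
      unfolding stopping_atoms_def by blast
    then show ?thesis
      using sum_atoms_indicator[OF x F, of "\<lambda>I. (avg M I (\<lambda>y. \<bar>f y\<bar>))\<^sup>2"]
      by (simp add: sum_ennreal avg_seq_def)
  qed
  then show ?thesis unfolding sparse_square_fn_def by simp
qed

lemma square_fn_le_sparse:
  assumes x: "x \<in> {0..1}"
  shows "square_fn M D f x \<le> ennreal (sqrt 130) * sparse_square_fn M stopping_atoms f x"
  unfolding square_fn_eq[OF x] sparse_square_fn_eq[OF x] esqrt_mult[of 130, symmetric, simplified]
  using suminf_increments_le_stops[OF avg_seq_dominated[OF x]]
  by (intro esqrt_mono) (simp add: stopping_def)

definition controlled :: "nat \<Rightarrow> real \<Rightarrow> nat \<Rightarrow> real \<Rightarrow> bool" where
  "controlled p lam j y \<longleftrightarrow> (\<forall>i. p \<le> i \<and> i \<le> j \<longrightarrow> avg_seq (\<lambda>x. \<bar>f x\<bar>) y i \<le> 4 * lam)"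

definition stopped_sq_sum :: "nat \<Rightarrow> real \<Rightarrow> nat \<Rightarrow> nat \<Rightarrow> real \<Rightarrow> real" where
  "stopped_sq_sum p lam n N y = (\<Sum>j\<in>{n..<N}.
     if controlled p lam (Suc j) y then (avg_seq f y (Suc j) - avg_seq f y j)\<^sup>2 else 0)"

definition large_sq_set :: "nat \<Rightarrow> real \<Rightarrow> nat \<Rightarrow> nat \<Rightarrow> real set \<Rightarrow> real \<Rightarrow> real set" where
  "large_sq_set p lam N n I s = {y \<in> I. 96 * lam\<^sup>2 < s + stopped_sq_sum p lam n N y}"

lemma controlled_mono: "controlled p lam j y \<Longrightarrow> i \<le> j \<Longrightarrow> controlled p lam i y"
  unfolding controlled_def by auto

lemma controlled_eq_coarser:
  assumes "y \<in> {0..1}" "z \<in> {0..1}" "atom_at N y = atom_at N z" "j \<le> N"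
  shows "controlled p lam j y = controlled p lam j z"
  unfolding controlled_def using avg_seq_eq_coarser[OF assms(1-3)] assms(4) by fastforce

lemma controlled_in_atom:
  assumes "I \<in> D n" "y \<in> I" "z \<in> I"
  shows "controlled p lam n y = controlled p lam n z"
proof (rule controlled_eq_coarser)
  show "atom_at n y = atom_at n z" using atom_at_eq[OF assms(1)] assms(2,3) by simp
qed (use assms atom_subset[OF assms(1)] in blast)+

lemma stopped_sq_sum_eq_coarser:
  assumes "y \<in> {0..1}" "z \<in> {0..1}" "atom_at N y = atom_at N z"
  shows "stopped_sq_sum p lam n N y = stopped_sq_sum p lam n N z"
  unfolding stopped_sq_sum_def
  using controlled_eq_coarser[OF assms] avg_seq_eq_coarser[OF assms]
  by (intro sum.cong) auto

lemma stopped_sq_sum_Suc: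
  "n < N \<Longrightarrow> stopped_sq_sum p lam n N y
    = (if controlled p lam (Suc n) y then (avg_seq f y (Suc n) - avg_seq f y n)\<^sup>2 else 0)
      + stopped_sq_sum p lam (Suc n) N y"
  unfolding stopped_sq_sum_def by (simp add: sum.atLeast_Suc_lessThan)

lemma stopped_sq_sum_uncontrolled:
  "\<not> controlled p lam (Suc n) y \<Longrightarrow> stopped_sq_sum p lam n N y = 0"
  unfolding stopped_sq_sum_def
  by (intro sum.neutral ballI) (metis atLeastLessThan_iff controlled_mono Suc_le_mono)

lemma stopped_sq_sum_mono: "N \<le> N' \<Longrightarrow> stopped_sq_sum p lam n N y \<le> stopped_sq_sum p lam n N' y"
  unfolding stopped_sq_sum_def by (rule sum_mono2) simp_all

lemma large_sq_set_mono:
  assumes "N \<le> N'"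
  shows "large_sq_set p lam N n I s \<subseteq> large_sq_set p lam N' n I s"
proof
  fix y assume "y \<in> large_sq_set p lam N n I s"
  then show "y \<in> large_sq_set p lam N' n I s"
    using stopped_sq_sum_mono[OF assms, of p lam n y] unfolding large_sq_set_def by auto
qed

lemma large_sq_set_sets:
  assumes "I \<in> D n" "n \<le> N"
  shows "large_sq_set p lam N n I s \<in> sets M"
  unfolding large_sq_set_def
  by (rule atom_subset_sets_determined[OF assms]) (use stopped_sq_sum_eq_coarser in metis)

lemma controlled_abs_avg_le:
  assumes I: "I \<in> D n" and "p \<le> n" and "\<forall>y\<in>I. controlled p lam n y"
  shows "\<bar>avg M I f\<bar> \<le> 4 * lam"
proof -
  obtain y where y: "y \<in> I" using atom_nonempty[OF I] by blast
  have "avg_seq (\<lambda>x. \<bar>f x\<bar>) y n \<le> 4 * lam" using assms y unfolding controlled_def by auto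
  then show ?thesis
    using abs_avg_le_avg_abs[OF integrable_f atom_sets[OF I]] avg_seq_eq[OF I y] by simp
qed

text \<open>In large_sq_set the parameter s carries the part of the stopped square sum already
  accumulated above level n; a child either keeps the control and inherits s plus its own increment,
  or loses it, after which no further increment is counted.\<close>

definition large_sq_piece :: "nat \<Rightarrow> real \<Rightarrow> nat \<Rightarrow> nat \<Rightarrow> real set \<Rightarrow> real \<Rightarrow> real set \<Rightarrow> real set" where
  "large_sq_piece p lam N n I s I' =
    (if \<forall>y\<in>I'. controlled p lam (Suc n) y
     then large_sq_set p lam N (Suc n) I' (s + (avg M I' f - avg M I f)\<^sup>2)
     else if 96 * lam\<^sup>2 < s then I' else {})"

lemma large_sq_set_cover:
  assumes "n < N" and I: "I \<in> D n"
  shows "large_sq_set p lam N n I s \<subseteq> (\<Union>I'\<in>ch D I n. large_sq_piece p lam N n I s I')"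
proof
  fix y assume y: "y \<in> large_sq_set p lam N n I s"
  then have "y \<in> I" by (simp add: large_sq_set_def)
  define I' where "I' = atom_at (Suc n) y"
  have I': "I' \<in> ch D I n" "I' \<in> D (Suc n)" "y \<in> I'"
    using atom_at_Suc_in_ch[OF I \<open>y \<in> I\<close>] ch_subset_atoms mem_atom_at atom_subset[OF I] \<open>y \<in> I\<close>
    unfolding I'_def by blast+
  have "y \<in> large_sq_piece p lam N n I s I'"
  proof (cases "\<forall>z\<in>I'. controlled p lam (Suc n) z")
    case True
    then have "(avg_seq f y (Suc n) - avg_seq f y n)\<^sup>2 = (avg M I' f - avg M I f)\<^sup>2"
      using avg_seq_eq[OF I'(2,3)] avg_seq_eq[OF I \<open>y \<in> I\<close>] by simp
    then show ?thesis
      using True y I'(3) stopped_sq_sum_Suc[OF \<open>n < N\<close>, of p lam y]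
      unfolding large_sq_piece_def large_sq_set_def by (simp add: add.assoc)
  next
    case False
    then have "\<not> controlled p lam (Suc n) y" using controlled_in_atom[OF I'(2,3)] by blast
    then have "96 * lam\<^sup>2 < s"
      using y stopped_sq_sum_uncontrolled unfolding large_sq_set_def by simp
    then have "large_sq_piece p lam N n I s I' = I'"
      unfolding large_sq_piece_def by (subst if_not_P[OF False]) simp
    then show ?thesis using I'(3) by simp
  qed
  then show "y \<in> (\<Union>I'\<in>ch D I n. large_sq_piece p lam N n I s I')" using I'(1) by blast
qed

lemma large_sq_piece_bound:
  assumes I': "I' \<in> ch D I n" and a: "\<bar>avg M I f\<bar> \<le> 4 * lam" and "0 \<le> s"
    and IH: "\<forall>y\<in>I'. controlled p lam (Suc n) y \<Longrightarrow>
      96 * lam\<^sup>2 * measure M (large_sq_set p lam N (Suc n) I' (s + (avg M I' f - avg M I f)\<^sup>2))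
        + measure M I' * (avg M I' f)\<^sup>2
      \<le> (s + (avg M I' f - avg M I f)\<^sup>2 + 16 * lam\<^sup>2) * measure M I' + 8 * lam * (LINT y:I'|M. \<bar>f y\<bar>)"
  shows "96 * lam\<^sup>2 * measure M (large_sq_piece p lam N n I s I')
    \<le> (s + 16 * lam\<^sup>2 + (avg M I f)\<^sup>2) * measure M I' + 8 * lam * (LINT y:I'|M. \<bar>f y\<bar>)
      - 2 * avg M I f * (LINT y:I'|M. f y)"
proof -
  have I'D: "I' \<in> D (Suc n)" using I' ch_subset_atoms by blast
  define a a' mu where "a = avg M I f" and "a' = avg M I' f" and "mu = measure M I'"
  have int_f: "(LINT y:I'|M. f y) = mu * a'"
    unfolding mu_def a'_def by (rule set_integral_eq_measure_avg[OF I'D])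
  show ?thesis
  proof (cases "\<forall>y\<in>I'. controlled p lam (Suc n) y")
    case True
    have "(s + (a' - a)\<^sup>2 + 16 * lam\<^sup>2) * mu - mu * a'\<^sup>2 = (s + 16 * lam\<^sup>2 + a\<^sup>2) * mu - 2 * a * (mu * a')"
      by (simp add: power2_eq_square algebra_simps)
    then show ?thesis
      using IH[OF True] True unfolding large_sq_piece_def int_f a_def[symmetric] a'_def[symmetric] mu_def[symmetric]
      by simp
  next
    case False
    have "96 * lam\<^sup>2 * measure M (large_sq_piece p lam N n I s I') \<le> s * mu"
      unfolding large_sq_piece_def mu_def using \<open>0 \<le> s\<close> by (subst if_not_P[OF False]) (simp add: mult_right_mono)
    moreover have "a * (LINT y:I'|M. f y) \<le> 4 * lam * (LINT y:I'|M. \<bar>f y\<bar>)"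
    proof -
      have "a * (LINT y:I'|M. f y) \<le> \<bar>a\<bar> * \<bar>LINT y:I'|M. f y\<bar>" by (simp add: abs_mult[symmetric])
      also have "\<dots> \<le> 4 * lam * (LINT y:I'|M. \<bar>f y\<bar>)"
        using a abs_set_integral_le[OF integrable_f atom_sets[OF I'D]] unfolding a_def by (intro mult_mono) auto
      finally show ?thesis .
    qed
    moreover have "0 \<le> (16 * lam\<^sup>2 + a\<^sup>2) * mu" unfolding mu_def by simp
    ultimately show ?thesis unfolding a_def[symmetric] mu_def[symmetric] by (simp add: algebra_simps)
  qed
qed

lemma sum_piece_bounds:
  assumes I: "I \<in> D n"
  shows "(\<Sum>I'\<in>ch D I n. (s + 16 * lam\<^sup>2 + (avg M I f)\<^sup>2) * measure M I' + 8 * lam * (LINT y:I'|M. \<bar>f y\<bar>)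
      - 2 * avg M I f * (LINT y:I'|M. f y))
    = (s + 16 * lam\<^sup>2) * measure M I + 8 * lam * (LINT y:I|M. \<bar>f y\<bar>) - measure M I * (avg M I f)\<^sup>2"
proof -
  have "(LINT y:I|M. f y) = measure M I * avg M I f" by (rule set_integral_eq_measure_avg[OF I])
  then show ?thesis
    using measure_sum_ch[OF I] set_integral_sum_ch[OF I integrable_f]
      set_integral_sum_ch[OF I integrable_abs[OF integrable_f]]
    by (simp add: sum.distrib sum_subtractf sum_distrib_left[symmetric] sum_distrib_right[symmetric]
        power2_eq_square algebra_simps)
qed

text \<open>The term |I| <f>_I^2 makes the induction close: summed over the children, the increments satisfy
  \<Sum> |I'| (<f>_I' - <f>_I)^2 = \<Sum> |I'| <f>_I'^2 - |I| <f>_I^2.  The term 8 lam \<integral>_I |f| pays for the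
  children where the control is lost, using |<f>_I| \<le> 4 lam.\<close>

lemma stopped_L2_bound:
  assumes "0 \<le> lam" "0 \<le> s" "p \<le> n" "n \<le> N" "I \<in> D n" "\<forall>y\<in>I. controlled p lam n y"
  shows "96 * lam\<^sup>2 * measure M (large_sq_set p lam N n I s) + measure M I * (avg M I f)\<^sup>2
    \<le> (s + 16 * lam\<^sup>2) * measure M I + 8 * lam * (LINT y:I|M. \<bar>f y\<bar>)"
  using assms(2-)
proof (induction "N - n" arbitrary: n I s)
  case 0
  then have "n = N" by simp
  have "96 * lam\<^sup>2 * measure M (large_sq_set p lam N n I s) \<le> s * measure M I"
    unfolding large_sq_set_def stopped_sq_sum_def \<open>n = N\<close> using \<open>0 \<le> s\<close>
    by (cases "96 * lam\<^sup>2 < s") (auto simp: mult_right_mono)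
  moreover have "measure M I * (avg M I f)\<^sup>2 \<le> 16 * lam\<^sup>2 * measure M I"
  proof -
    have "(avg M I f)\<^sup>2 \<le> (4 * lam)\<^sup>2"
      using controlled_abs_avg_le[OF "0.prems"(4,2,5)] by (metis abs_ge_zero power2_abs power_mono)
    then show ?thesis by (simp add: power_mult_distrib mult.commute mult_left_mono)
  qed
  moreover have "0 \<le> 8 * lam * (LINT y:I|M. \<bar>f y\<bar>)"
    using assms(1) set_integral_eq_measure_avg[OF "0.prems"(4)] avg_abs_nonneg by simp
  ultimately show ?case by (simp add: distrib_right)
next
  case (Suc k)
  define T where "T = 96 * lam\<^sup>2"
  have ch: "I' \<in> D (Suc n)" if "I' \<in> ch D I n" for I' using that ch_subset_atoms by blast
  have a: "\<bar>avg M I f\<bar> \<le> 4 * lam" by (rule controlled_abs_avg_le[OF Suc.prems(4,2,5)])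
  have "T * measure M (large_sq_set p lam N n I s)
      \<le> T * (\<Sum>I'\<in>ch D I n. measure M (large_sq_piece p lam N n I s I'))"
    using Suc.hyps Suc.prems ch atom_sets large_sq_set_sets unfolding T_def
    by (intro mult_left_mono measure_le_sum_cover finite_ch large_sq_set_cover)
      (auto simp: large_sq_piece_def)
  also have "\<dots> \<le> (\<Sum>I'\<in>ch D I n. (s + 16 * lam\<^sup>2 + (avg M I f)\<^sup>2) * measure M I'
      + 8 * lam * (LINT y:I'|M. \<bar>f y\<bar>) - 2 * avg M I f * (LINT y:I'|M. f y))"
    unfolding sum_distrib_left T_def
  proof (intro sum_mono large_sq_piece_bound[OF _ a \<open>0 \<le> s\<close>])
    fix I' assume "I' \<in> ch D I n" "\<forall>y\<in>I'. controlled p lam (Suc n) y"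
    then show "96 * lam\<^sup>2 * measure M (large_sq_set p lam N (Suc n) I' (s + (avg M I' f - avg M I f)\<^sup>2))
        + measure M I' * (avg M I' f)\<^sup>2
      \<le> (s + (avg M I' f - avg M I f)\<^sup>2 + 16 * lam\<^sup>2) * measure M I' + 8 * lam * (LINT y:I'|M. \<bar>f y\<bar>)"
      using Suc ch by simp
  qed
  finally show ?case unfolding sum_piece_bounds[OF Suc.prems(4)] T_def by simp
qed

lemma stopping_child:
  assumes J: "(J, p) \<in> stopping_atoms" and c: "(I, k) \<in> chS stopping_atoms (J, p)" and y: "y \<in> I"
  shows "y \<in> J \<and> p < k \<and> stops (avg_seq f y) (avg_seq (\<lambda>x. \<bar>f x\<bar>) y) p k"
proof -
  have IS: "(I, k) \<in> stopping_atoms" and "atom_less (I, k) (J, p)"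
    and maximal: "\<not> (\<exists>b\<in>stopping_atoms. atom_less b (J, p) \<and> atom_less (I, k) b)"
    using c unfolding chS_def by auto
  then have "I \<subseteq> J" "p \<le> k" "(I, k) \<noteq> (J, p)" unfolding atom_less_def by auto
  have ID: "I \<in> D k" and JD: "J \<in> D p" using IS J unfolding stopping_atoms_def by auto
  have yJ: "y \<in> J" and yU: "y \<in> {0..1}" using \<open>I \<subseteq> J\<close> y atom_subset[OF ID] by auto
  have stop: "stopping i y" if "(A, i) \<in> stopping_atoms" "y \<in> A" for A i
    using that stopping_in_atom unfolding stopping_atoms_def by blast
  have "p < k"
  proof (rule ccontr)
    assume "\<not> p < k"
    then have "k = p" using \<open>p \<le> k\<close> by simp
    then show False using atoms_disjoint[OF ID _ y] JD yJ \<open>(I, k) \<noteq> (J, p)\<close> by auto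
  qed
  moreover have "\<not> stopping i y" if "p < i" "i < k" for i
  proof
    assume "stopping i y"
    then have "(atom_at i y, i) \<in> stopping_atoms"
      unfolding stopping_atoms_def using atom_at_in[OF yU] mem_atom_at[OF yU] by blast
    moreover have "atom_at i y \<subseteq> J" "I \<subseteq> atom_at i y"
      using atom_at_antimono[OF yU, of p i] atom_at_antimono[OF yU, of i k] that
        atom_at_eq[OF JD yJ] atom_at_eq[OF ID y] by simp_all
    then have "atom_less (atom_at i y, i) (J, p)" "atom_less (I, k) (atom_at i y, i)"
      using that unfolding atom_less_def by auto
    ultimately show False using maximal by blast
  qed
  ultimately have "stops (avg_seq f y) (avg_seq (\<lambda>x. \<bar>f x\<bar>) y) p k"
    using stop[OF IS y] stop[OF J yJ] unfolding stopping_def by (intro stops_at_next_stop) auto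
  then show ?thesis using yJ \<open>p < k\<close> by blast
qed

lemma avg_seq_abs_zero:
  assumes J: "J \<in> D p" and zero: "avg M J (\<lambda>x. \<bar>f x\<bar>) = 0" and y: "y \<in> J" and "p \<le> m"
  shows "avg_seq (\<lambda>x. \<bar>f x\<bar>) y m = 0"
proof -
  have yU: "y \<in> {0..1}" using atom_subset[OF J] y by blast
  have Am: "atom_at m y \<in> D m" and "atom_at m y \<subseteq> J"
    using atom_at_in[OF yU] atom_at_antimono[OF yU \<open>p \<le> m\<close>] atom_at_eq[OF J y] by auto
  then have "(LINT x:atom_at m y|M. \<bar>f x\<bar>) \<le> (LINT x:J|M. \<bar>f x\<bar>)"
    using set_integral_abs_mono[OF integrable_f] atom_sets J by blast
  also have "\<dots> = 0" using set_integral_eq_measure_avg[OF J] zero by simp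
  finally show ?thesis
    using avg_abs_nonneg[of M "atom_at m y" f] atom_measure_pos[OF Am]
    unfolding avg_seq_def avg_def by (simp add: zero_le_divide_iff)
qed

lemma no_stops_if_avg_abs_zero:
  assumes "J \<in> D p" "avg M J (\<lambda>x. \<bar>f x\<bar>) = 0" "y \<in> J" "p < k"
  shows "\<not> stops (avg_seq f y) (avg_seq (\<lambda>x. \<bar>f x\<bar>) y) p k"
proof -
  have "avg_seq (\<lambda>x. \<bar>f x\<bar>) y m = 0 \<and> avg_seq f y m = 0" if "p \<le> m" for m
    using avg_seq_abs_zero[OF assms(1-3) that] avg_seq_dominated[of y m] assms(1,3) atom_subset by fastforce
  then show ?thesis using \<open>p < k\<close> unfolding stops_def by simp
qed

lemma stops_in_exceed_or_large:
  assumes J: "J \<in> D p" "y \<in> J" and "p < k" and stop: "stops (avg_seq f y) (avg_seq (\<lambda>x. \<bar>f x\<bar>) y) p k"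
  defines "lam \<equiv> avg M J (\<lambda>x. \<bar>f x\<bar>)"
  shows "y \<in> exceed_set (\<lambda>x. \<bar>f x\<bar>) (4 * lam) k p J \<union> large_sq_set p lam k p J 0"
proof (cases "\<exists>m. p < m \<and> m \<le> k \<and> 4 * lam < avg_seq (\<lambda>x. \<bar>f x\<bar>) y m")
  case True
  then show ?thesis using J unfolding exceed_set_def by blast
next
  case False
  have lam: "avg_seq (\<lambda>x. \<bar>f x\<bar>) y p = lam" "0 \<le> lam"
    using avg_seq_eq[OF J] avg_abs_nonneg unfolding lam_def by auto
  have "controlled p lam (Suc j) y" if "j < k" for j
    unfolding controlled_def
  proof (intro allI impI)
    fix i assume "p \<le> i \<and> i \<le> Suc j"
    then have "i = p \<or> p < i \<and> i \<le> k" using that by auto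
    then show "avg_seq (\<lambda>x. \<bar>f x\<bar>) y i \<le> 4 * lam"
      using False lam by (auto simp: not_less)
  qed
  then have "stopped_sq_sum p lam p k y = (\<Sum>j\<in>{p..<k}. (avg_seq f y (Suc j) - avg_seq f y j)\<^sup>2)"
    unfolding stopped_sq_sum_def by (intro sum.cong) auto
  moreover have "96 * lam\<^sup>2 < (\<Sum>j\<in>{p..<k}. (avg_seq f y (Suc j) - avg_seq f y j)\<^sup>2)"
    using stop False \<open>p < k\<close> lam unfolding stops_def by auto
  ultimately show ?thesis using J unfolding large_sq_set_def by simp
qed

lemma measure_exceed_le_quarter:
  assumes J: "J \<in> D p" and "p \<le> N" and pos: "0 < avg M J (\<lambda>x. \<bar>f x\<bar>)"
  defines "lam \<equiv> avg M J (\<lambda>x. \<bar>f x\<bar>)"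
  shows "4 * measure M (exceed_set (\<lambda>x. \<bar>f x\<bar>) (4 * lam) N p J) \<le> measure M J"
proof -
  have "4 * lam * measure M (exceed_set (\<lambda>x. \<bar>f x\<bar>) (4 * lam) N p J) \<le> (LINT y:J|M. \<bar>f y\<bar>)"
    by (rule maximal_inequality) (use integrable_f pos lam_def \<open>p \<le> N\<close> J in auto)
  then have "lam * (4 * measure M (exceed_set (\<lambda>x. \<bar>f x\<bar>) (4 * lam) N p J)) \<le> lam * measure M J"
    using set_integral_eq_measure_avg[OF J] unfolding lam_def by (simp add: algebra_simps)
  then show ?thesis using pos unfolding lam_def by (simp add: mult_le_cancel_left_pos)
qed

lemma controlled_at_start:
  assumes J: "J \<in> D p" "y \<in> J" and "0 \<le> avg M J (\<lambda>x. \<bar>f x\<bar>)"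
  shows "controlled p (avg M J (\<lambda>x. \<bar>f x\<bar>)) p y"
  unfolding controlled_def
proof (intro allI impI)
  fix i assume "p \<le> i \<and> i \<le> p"
  then have "i = p" by linarith
  show "avg_seq (\<lambda>x. \<bar>f x\<bar>) y i \<le> 4 * avg M J (\<lambda>x. \<bar>f x\<bar>)"
    unfolding \<open>i = p\<close> avg_seq_eq[OF J] using assms(3) by linarith
qed

lemma measure_large_sq_le_quarter:
  assumes J: "J \<in> D p" and "p \<le> N" and pos: "0 < avg M J (\<lambda>x. \<bar>f x\<bar>)"
  defines "lam \<equiv> avg M J (\<lambda>x. \<bar>f x\<bar>)"
  shows "4 * measure M (large_sq_set p lam N p J 0) \<le> measure M J"
proof -
  have "96 * lam\<^sup>2 * measure M (large_sq_set p lam N p J 0) + measure M J * (avg M J f)\<^sup>2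
      \<le> (0 + 16 * lam\<^sup>2) * measure M J + 8 * lam * (LINT y:J|M. \<bar>f y\<bar>)"
    using pos \<open>p \<le> N\<close> J controlled_at_start[OF J] unfolding lam_def by (intro stopped_L2_bound) auto
  then have "96 * (lam\<^sup>2 * measure M (large_sq_set p lam N p J 0)) + measure M J * (avg M J f)\<^sup>2
      \<le> 24 * (lam\<^sup>2 * measure M J)"
    using set_integral_eq_measure_avg[OF J] unfolding lam_def by (simp add: power2_eq_square algebra_simps)
  moreover have "0 \<le> measure M J * (avg M J f)\<^sup>2" by simp
  ultimately have "lam\<^sup>2 * (4 * measure M (large_sq_set p lam N p J 0)) \<le> lam\<^sup>2 * measure M J"
    by linarith
  then show ?thesis using pos unfolding lam_def by (simp add: mult_le_cancel_left_pos)
qed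

lemma exceed_or_large_measure_le:
  assumes J: "J \<in> D p" and "p \<le> N" and pos: "0 < avg M J (\<lambda>x. \<bar>f x\<bar>)"
  defines "lam \<equiv> avg M J (\<lambda>x. \<bar>f x\<bar>)"
  shows "measure M (exceed_set (\<lambda>x. \<bar>f x\<bar>) (4 * lam) N p J \<union> large_sq_set p lam N p J 0)
    \<le> measure M J / 2"
proof -
  have "measure M (exceed_set (\<lambda>x. \<bar>f x\<bar>) (4 * lam) N p J \<union> large_sq_set p lam N p J 0)
      \<le> measure M (exceed_set (\<lambda>x. \<bar>f x\<bar>) (4 * lam) N p J) + measure M (large_sq_set p lam N p J 0)"
    using exceed_set_sets[OF J \<open>p \<le> N\<close>] large_sq_set_sets[OF J \<open>p \<le> N\<close>] by (rule measure_Un_le)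
  then show ?thesis
    using measure_exceed_le_quarter[OF assms(1-3)] measure_large_sq_le_quarter[OF assms(1-3)]
    unfolding lam_def by linarith
qed

lemma emeasure_subset_exceed_or_large_le:
  assumes J: "J \<in> D p" and pos: "0 < avg M J (\<lambda>x. \<bar>f x\<bar>)"
  defines "lam \<equiv> avg M J (\<lambda>x. \<bar>f x\<bar>)"
  assumes A: "A \<subseteq> (\<Union>N. exceed_set (\<lambda>x. \<bar>f x\<bar>) (4 * lam) (N + p) p J \<union> large_sq_set p lam (N + p) p J 0)"
  shows "emeasure M A \<le> emeasure M J / 2"
proof -
  define U where "U N = exceed_set (\<lambda>x. \<bar>f x\<bar>) (4 * lam) (N + p) p J \<union> large_sq_set p lam (N + p) p J 0" for N
  have U_sets: "U N \<in> sets M" for N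
    unfolding U_def using exceed_set_sets[OF J] large_sq_set_sets[OF J] by simp
  have "incseq U"
  proof (rule incseq_SucI)
    show "U N \<subseteq> U (Suc N)" for N
      unfolding U_def exceed_set_def using large_sq_set_mono[of "N + p" "Suc N + p"] by force
  qed
  have "emeasure M A \<le> emeasure M (\<Union>N. U N)"
    using A U_sets unfolding U_def by (intro emeasure_mono) auto
  also have "\<dots> = (SUP N. emeasure M (U N))"
    using \<open>incseq U\<close>
    using U_sets by (intro SUP_emeasure_incseq[symmetric]) auto
  also have "\<dots> \<le> emeasure M J / 2"
  proof (rule SUP_least)
    fix N
    show "emeasure M (U N) \<le> emeasure M J / 2"
      unfolding U_def lam_def using exceed_or_large_measure_le[OF J _ pos, of "N + p"]
      by (intro emeasure_le_half) auto
  qed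
  finally show ?thesis .
qed

lemma next_stops_subset:
  assumes JS: "(J, p) \<in> stopping_atoms"
  defines "lam \<equiv> avg M J (\<lambda>x. \<bar>f x\<bar>)"
  shows "(\<Union>k. \<Union>{I. (I, k) \<in> chS stopping_atoms (J, p)})
    \<subseteq> (\<Union>N. exceed_set (\<lambda>x. \<bar>f x\<bar>) (4 * lam) (N + p) p J \<union> large_sq_set p lam (N + p) p J 0)"
proof
  fix y assume "y \<in> (\<Union>k. \<Union>{I. (I, k) \<in> chS stopping_atoms (J, p)})"
  then obtain k I where "(I, k) \<in> chS stopping_atoms (J, p)" "y \<in> I" by blast
  then have y: "y \<in> J" "p < k" "stops (avg_seq f y) (avg_seq (\<lambda>x. \<bar>f x\<bar>) y) p k"
    using stopping_child[OF JS] by auto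
  have "J \<in> D p" using JS unfolding stopping_atoms_def by auto
  then have "y \<in> exceed_set (\<lambda>x. \<bar>f x\<bar>) (4 * lam) k p J \<union> large_sq_set p lam k p J 0"
    using y unfolding lam_def by (intro stops_in_exceed_or_large)
  moreover have "(k - p) + p = k" using y(2) by simp
  ultimately have "y \<in> exceed_set (\<lambda>x. \<bar>f x\<bar>) (4 * lam) ((k - p) + p) p J
      \<union> large_sq_set p lam ((k - p) + p) p J 0"
    by (simp only:)
  then show "y \<in> (\<Union>N. exceed_set (\<lambda>x. \<bar>f x\<bar>) (4 * lam) (N + p) p J \<union> large_sq_set p lam (N + p) p J 0)"
    by blast
qed

lemma sparse_stopping_atoms: "sparse_collection M stopping_atoms"
  unfolding sparse_collection_def
proof
  fix J' assume "J' \<in> stopping_atoms"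
  then obtain J p where J': "J' = (J, p)" and JS: "(J, p) \<in> stopping_atoms" by (cases J') auto
  then have J: "J \<in> D p" unfolding stopping_atoms_def by auto
  let ?G = "\<Union>k. \<Union>{I. (I, k) \<in> chS stopping_atoms (J, p)}"
  have "(\<Sum>k. \<Sum>I\<in>{I. (I, k) \<in> chS stopping_atoms (J, p)}. emeasure M I) = emeasure M ?G"
    by (rule suminf_chS_emeasure) (auto simp: stopping_atoms_def atoms_def)
  also have "\<dots> \<le> emeasure M J / 2"
  proof (cases "avg M J (\<lambda>x. \<bar>f x\<bar>) = 0")
    case True
    then have empty: "?G = {}" using stopping_child[OF JS] no_stops_if_avg_abs_zero[OF J] by blast
    show ?thesis unfolding empty by simp
  next
    case False
    then have "0 < avg M J (\<lambda>x. \<bar>f x\<bar>)" using avg_abs_nonneg[of M J f] by simp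
    then show ?thesis using emeasure_subset_exceed_or_large_le[OF J _ next_stops_subset[OF JS]] by blast
  qed
  finally show "(\<Sum>k. \<Sum>I\<in>{I. (I, k) \<in> chS stopping_atoms J'}. emeasure M I) \<le> emeasure M (fst J') / 2"
    unfolding J' fst_conv .
qed

end

theorem lemma8p1:
  shows "\<exists>C::real. C > 0 \<and>
    (\<forall>(M::real measure) D (f::real \<Rightarrow> real).
       unit_prob M \<longrightarrow> atomic_filtration M D \<longrightarrow> integrable M f \<longrightarrow>
       (\<exists>S \<subseteq> atoms D. sparse_collection M S \<and>
          (AE x in M. square_fn M D f x \<le> ennreal C * sparse_square_fn M S f x)))"
proof (intro exI[of _ "sqrt 130"] conjI allI impI)
  fix M :: "real measure" and D :: "nat \<Rightarrow> real set set" and f :: "real \<Rightarrow> real"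
  assume M: "unit_prob M" and D: "atomic_filtration M D" and f: "integrable M f"
  have "integrable_on_filtration M D f"
    unfolding integrable_on_filtration_def atomic_filtration_space_def integrable_on_filtration_axioms_def
    using M D f by (simp add: unit_prob_def)
  then interpret integrable_on_filtration M D f .
  have "stopping_atoms \<subseteq> atoms D" unfolding stopping_atoms_def atoms_def by auto
  moreover have "AE x in M. square_fn M D f x \<le> ennreal (sqrt 130) * sparse_square_fn M stopping_atoms f x"
  proof (rule AE_I2)
    fix x assume "x \<in> space M"
    then show "square_fn M D f x \<le> ennreal (sqrt 130) * sparse_square_fn M stopping_atoms f x"
      using M square_fn_le_sparse unfolding unit_prob_def by simp
  qed
  ultimately show "\<exists>S \<subseteq> atoms D. sparse_collection M S \<and>
      (AE x in M. square_fn M D f x \<le> ennreal (sqrt 130) * sparse_square_fn M S f x)"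
    using sparse_stopping_atoms by blast
qed simp

end
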